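(* Let $s\in[n]$ with $s\le n-2$. Then \[ \langle1|^{\otimes d}\left(\mathrm{tr}_{n-d}|\psi_s\rangle\langle\psi_s|\right)|1\rangle^{\otimes d}\geq 1-O(ds/n), \] where $\mathrm{tr}_{n-d}$ denotes the partial trace over the last $n-d$ qubits and the $O$-notation refers to $n\to\infty$.
   Context: On $n$ qubits, let $\omega=e^{2\pi i/n}$, $\sigma_m^-=|0\rangle\langle1|$ on qubit $m$, $S_-=\sum_{m=1}^n\sigma_m^-$, $|\Psi\rangle=\overline{\omega}\sum_{m=1}^n\omega^m\sigma_m^-|1\rangle^{\otimes n}$, and for $s=0,\dots,n-2$, $|\psi_s\rangle=S_-^s|\Psi\rangle/\|S_-^s|\Psi\rangle\|$ (the normalized magnon states). *)

theory Defs
  imports Complex_Main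
begin

text \<open>States of n qubits: functions from computational basis strings (bool lists of
length n; True = |1>, False = |0>, position i = qubit i+1) to amplitudes.\<close>

type_synonym qstate = "bool list \<Rightarrow> complex"

definition basis :: "nat \<Rightarrow> bool list set" where
  "basis n = {xs. length xs = n}"

definition omega :: "nat \<Rightarrow> complex" where
  "omega n = cis (2 * pi / real n)"

text \<open>sigma_minus on qubit i (0-based) = |0><1|: the amplitude at x with x_i = 0 is
the old amplitude at x with x_i flipped to 1.\<close>
definition sigma_minus :: "nat \<Rightarrow> qstate \<Rightarrow> qstate" where
  "sigma_minus i \<psi> = (\<lambda>xs. if i < length xs \<and> \<not> xs ! i then \<psi> (xs[i := True]) else 0)"

definition S_minus :: "nat \<Rightarrow> qstate \<Rightarrow> qstate" where
  "S_minus n \<psi> = (\<lambda>xs. \<Sum>i<n. sigma_minus i \<psi> xs)"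

definition all_ones :: "nat \<Rightarrow> qstate" where
  "all_ones n = (\<lambda>xs. if xs = replicate n True then 1 else 0)"

text \<open>|Psi> = conj(omega) * sum_{m=1}^n omega^m sigma_m^- |1...1>  (m = i+1).\<close>
definition Psi :: "nat \<Rightarrow> qstate" where
  "Psi n = (\<lambda>xs. cnj (omega n) * (\<Sum>i<n. omega n ^ (i + 1) * sigma_minus i (all_ones n) xs))"

definition vnorm :: "nat \<Rightarrow> qstate \<Rightarrow> real" where
  "vnorm n \<psi> = sqrt (\<Sum>xs\<in>basis n. (cmod (\<psi> xs))\<^sup>2)"

definition magnon :: "nat \<Rightarrow> nat \<Rightarrow> qstate" where
  "magnon n s = (let v = (S_minus n ^^ s) (Psi n) in (\<lambda>xs. v xs / complex_of_real (vnorm n v)))"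

definition proj :: "qstate \<Rightarrow> (bool list \<Rightarrow> bool list \<Rightarrow> complex)" where
  "proj \<psi> = (\<lambda>a b. \<psi> a * cnj (\<psi> b))"

definition ptrace_last :: "nat \<Rightarrow> nat \<Rightarrow> (bool list \<Rightarrow> bool list \<Rightarrow> complex)
    \<Rightarrow> (bool list \<Rightarrow> bool list \<Rightarrow> complex)" where
  "ptrace_last n d \<rho> = (\<lambda>a b. \<Sum>y\<in>basis (n - d). \<rho> (a @ y) (b @ y))"

end

theory Submission
  imports Defs
begin

text \<open>
A basis string is determined by the set Z of its zero positions. By induction on s, the vector
S_-^s |Psi> has amplitude s! (\<Sum>j\<in>Z. omega^j) at strings with |Z| = s + 1 and vanishes elsewhere,
so the weight in question is the ratio E {d..<n} / E {..<n} of the energies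
E A = \<Sum>Z. |\<Sum>j\<in>Z. omega^j|^2, Z ranging over the (s+1)-subsets of A. Expanding the square and
counting the subsets that contain a given pair of points gives
E A = C(k-2, s-1) |\<Sum>j\<in>A. omega^j|^2 + k C(k-2, s) for |A| = k. The n-th roots of unity sum to zero,
so E {..<n} = n C(n-2, s), whereas E {d..<n} \<ge> (n-d) C(n-2-d, s); the estimate
C(M-d, s) \<ge> C(M, s) (1 - ds/M) for M = n - 2 finishes the proof.
\<close>

definition zeros :: "bool list \<Rightarrow> nat set" where
  "zeros xs = {i. i < length xs \<and> \<not> xs ! i}"

lemma zeros_subset: "zeros xs \<subseteq> {..<length xs}"
  by (auto simp: zeros_def)

lemma finite_zeros [simp]: "finite (zeros xs)"
  using finite_subset[OF zeros_subset] by blast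

lemma zeros_list_update_True: "zeros (xs[i := True]) = zeros xs - {i}"
  by (cases "i < length xs") (auto simp: zeros_def nth_list_update)

lemma zeros_empty_iff: "zeros xs = {} \<longleftrightarrow> xs = replicate (length xs) True"
  by (auto simp: zeros_def list_eq_iff_nth_eq)

lemma zeros_inj: "length xs = length ys \<Longrightarrow> zeros xs = zeros ys \<Longrightarrow> xs = ys"
  by (auto simp: zeros_def set_eq_iff list_eq_iff_nth_eq)

lemma bij_betw_zeros:
  assumes "B \<subseteq> {..<n}"
  shows "bij_betw zeros {xs \<in> basis n. zeros xs \<subseteq> B} (Pow B)"
proof (rule bij_betwI')
  show "zeros xs = zeros ys \<longleftrightarrow> xs = ys"
    if "xs \<in> {xs \<in> basis n. zeros xs \<subseteq> B}" "ys \<in> {xs \<in> basis n. zeros xs \<subseteq> B}" for xs ys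
    using that zeros_inj by (auto simp: basis_def)
  show "zeros xs \<in> Pow B" if "xs \<in> {xs \<in> basis n. zeros xs \<subseteq> B}" for xs
    using that by simp
  show "\<exists>xs \<in> {xs \<in> basis n. zeros xs \<subseteq> B}. Z = zeros xs" if "Z \<in> Pow B" for Z
  proof
    show "Z = zeros (map (\<lambda>i. i \<notin> Z) [0..<n])"
      using that assms by (auto simp: zeros_def)
    then show "map (\<lambda>i. i \<notin> Z) [0..<n] \<in> {xs \<in> basis n. zeros xs \<subseteq> B}"
      using that by (auto simp: basis_def)
  qed
qed

lemma basis_eq_zeros_subset: "basis n = {xs \<in> basis n. zeros xs \<subseteq> {..<n}}"
  using zeros_subset by (auto simp: basis_def)

lemma sum_over_zeros:
  assumes "B \<subseteq> {..<n}"
  shows "(\<Sum>xs | xs \<in> basis n \<and> zeros xs \<subseteq> B. G (zeros xs)) = (\<Sum>Z\<in>Pow B. G Z)"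
  using sum.reindex_bij_betw[OF bij_betw_zeros[OF assms], of G] by simp

lemma append_replicate_True_image:
  assumes "d \<le> n"
  shows "(\<lambda>y. replicate d True @ y) ` basis (n - d) = {xs \<in> basis n. zeros xs \<subseteq> {d..<n}}"
proof (intro set_eqI iffI)
  fix xs assume "xs \<in> {xs \<in> basis n. zeros xs \<subseteq> {d..<n}}"
  then have "length xs = n" "zeros xs \<subseteq> {d..<n}"
    by (auto simp: basis_def)
  have "xs ! i" if "i < d" for i
  proof (rule ccontr)
    assume "\<not> xs ! i"
    then have "i \<in> zeros xs"
      using that assms \<open>length xs = n\<close> by (simp add: zeros_def)
    then show False
      using \<open>zeros xs \<subseteq> {d..<n}\<close> that by auto
  qed
  then have "take d xs = replicate d True"
    using assms \<open>length xs = n\<close> by (simp add: list_eq_iff_nth_eq)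
  then have "xs = replicate d True @ drop d xs"
    by (metis append_take_drop_id)
  moreover have "drop d xs \<in> basis (n - d)"
    using \<open>length xs = n\<close> by (simp add: basis_def)
  ultimately show "xs \<in> (\<lambda>y. replicate d True @ y) ` basis (n - d)"
    by (rule rev_image_eqI[rotated])
qed (use assms in \<open>auto simp: basis_def zeros_def nth_append split: if_splits\<close>)

lemma sigma_minus_apply:
  "sigma_minus i \<phi> xs = (if i \<in> zeros xs then \<phi> (xs[i := True]) else 0)"
  by (simp add: sigma_minus_def zeros_def)

lemma S_minus_apply:
  assumes "length xs = n"
  shows "S_minus n \<phi> xs = (\<Sum>i\<in>zeros xs. \<phi> (xs[i := True]))"
proof -
  have "S_minus n \<phi> xs = (\<Sum>i\<in>{..<n} \<inter> zeros xs. \<phi> (xs[i := True]))"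
    by (simp add: S_minus_def sigma_minus_apply sum.inter_restrict)
  also have "{..<n} \<inter> zeros xs = zeros xs"
    using zeros_subset assms by blast
  finally show ?thesis .
qed

lemma sigma_minus_all_ones:
  "sigma_minus i (all_ones n) xs = (if length xs = n \<and> zeros xs = {i} then 1 else 0)"
proof -
  have "xs[i := True] = replicate n True \<longleftrightarrow> length xs = n \<and> zeros (xs[i := True]) = {}"
    using zeros_empty_iff[of "xs[i := True]"] by (metis length_list_update length_replicate)
  then have "xs[i := True] = replicate n True \<longleftrightarrow> length xs = n \<and> zeros xs - {i} = {}"
    by (simp only: zeros_list_update_True)
  then have "i \<in> zeros xs \<and> xs[i := True] = replicate n True \<longleftrightarrow> length xs = n \<and> zeros xs = {i}"
    by blast
  then show ?thesis
    by (auto simp: sigma_minus_apply all_ones_def)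
qed

lemma norm_omega [simp]: "norm (omega n) = 1"
  by (simp add: omega_def)

lemma omega_mult_cnj_omega: "omega n * cnj (omega n) = 1"
  by (simp add: complex_norm_square[symmetric])

lemma omega_pow_self: "0 < n \<Longrightarrow> omega n ^ n = 1"
  by (simp add: omega_def DeMoivre)

lemma omega_neq_1:
  assumes "2 \<le> n"
  shows "omega n \<noteq> 1"
proof
  assume "omega n = 1"
  then have "cis (2 * pi * real 1 / real n) = cis (2 * pi * real 0 / real n)"
    by (simp add: omega_def)
  then have "(1::nat) = 0"
    using assms by (intro inj_onD[OF bij_betw_imp_inj_on[OF bij_betw_roots_unity]]) auto
  then show False
    by simp
qed

lemma sum_omega_powers: "2 \<le> n \<Longrightarrow> (\<Sum>j<n. omega n ^ j) = 0"
  by (simp add: geometric_sum omega_neq_1 omega_pow_self)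

lemma Psi_apply:
  "Psi n xs = (if length xs = n \<and> card (zeros xs) = 1 then (\<Sum>j\<in>zeros xs. omega n ^ j) else 0)"
proof (cases "length xs = n \<and> card (zeros xs) = 1")
  case True
  then obtain i where i: "zeros xs = {i}" "i < n"
    using zeros_subset by (fastforce simp: card_Suc_eq)
  have "Psi n xs = cnj (omega n) * (\<Sum>j<n. if j = i then omega n ^ (j + 1) else 0)"
    unfolding Psi_def using True i by (intro arg_cong2[where f = "(*)"] sum.cong) (auto simp: sigma_minus_all_ones)
  also have "\<dots> = omega n ^ i"
    using i by (simp add: mult.left_commute omega_mult_cnj_omega)
  finally show ?thesis using True i by simp
next
  case False
  then have "sigma_minus i (all_ones n) xs = 0" for i
    by (auto simp: sigma_minus_all_ones)
  then show ?thesis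
    using False by (auto simp: Psi_def)
qed

lemma sum_sum_remove:
  fixes f :: "'a \<Rightarrow> 'b :: comm_ring_1"
  assumes "finite Z"
  shows "(\<Sum>i\<in>Z. sum f (Z - {i})) = of_nat (card Z - 1) * sum f Z"
proof (cases "Z = {}")
  case False
  have "(\<Sum>i\<in>Z. sum f (Z - {i})) = (\<Sum>i\<in>Z. sum f Z - f i)"
    using assms by (intro sum.cong) (auto simp: sum_diff1)
  also have "\<dots> = of_nat (card Z) * sum f Z - sum f Z"
    by (simp add: sum_subtractf)
  also have "\<dots> = of_nat (card Z - 1) * sum f Z"
    using False assms by (simp add: of_nat_diff card_gt_0_iff Suc_le_eq algebra_simps)
  finally show ?thesis .
qed simp

lemma magnon_amplitude:
  "(S_minus n ^^ s) (Psi n) xs =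
     (if length xs = n \<and> card (zeros xs) = s + 1 then fact s * (\<Sum>j\<in>zeros xs. omega n ^ j) else 0)"
proof (induction s arbitrary: xs)
  case 0
  then show ?case by (simp add: Psi_apply)
next
  case (Suc s)
  show ?case
  proof (cases "length xs = n")
    case True
    let ?Z = "zeros xs"
    have "(S_minus n ^^ Suc s) (Psi n) xs = (\<Sum>i\<in>?Z. (S_minus n ^^ s) (Psi n) (xs[i := True]))"
      using True by (simp add: S_minus_apply)
    also have "\<dots> = (\<Sum>i\<in>?Z. if card (?Z - {i}) = s + 1 then fact s * (\<Sum>j\<in>?Z - {i}. omega n ^ j) else 0)"
      unfolding Suc.IH zeros_list_update_True using True by simp
    also have "\<dots> = (if card ?Z = s + 2 then fact s * (\<Sum>i\<in>?Z. \<Sum>j\<in>?Z - {i}. omega n ^ j) else 0)"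
      by (auto simp: sum_distrib_left intro!: sum.neutral)
    also have "\<dots> = (if card ?Z = Suc s + 1 then fact (Suc s) * (\<Sum>j\<in>?Z. omega n ^ j) else 0)"
      by (simp add: sum_sum_remove algebra_simps)
    finally show ?thesis using True by simp
  next
    case False
    have "(S_minus n ^^ Suc s) (Psi n) xs = (\<Sum>i<n. sigma_minus i ((S_minus n ^^ s) (Psi n)) xs)"
      by (simp add: S_minus_def)
    also have "\<dots> = 0"
      using False by (intro sum.neutral) (simp add: sigma_minus_apply Suc.IH zeros_def)
    finally show ?thesis
      using False by simp
  qed
qed

lemma card_supersets:
  assumes "finite A" "B \<subseteq> A"
  shows "card {Z. B \<subseteq> Z \<and> Z \<subseteq> A \<and> card Z = card B + m} = (card A - card B) choose m"
proof -
  have "finite B"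
    using assms finite_subset by blast
  have card_Un: "card (W \<union> B) = card B + card W" if "W \<subseteq> A - B" for W
    using that assms \<open>finite B\<close> by (subst card_Un_disjoint) (auto intro: finite_subset)
  have "bij_betw (\<lambda>W. W \<union> B) {W. W \<subseteq> A - B \<and> card W = m} {Z. B \<subseteq> Z \<and> Z \<subseteq> A \<and> card Z = card B + m}"
  proof (rule bij_betw_byWitness[where f' = "\<lambda>Z. Z - B"])
    show "(\<lambda>W. W \<union> B) ` {W. W \<subseteq> A - B \<and> card W = m} \<subseteq> {Z. B \<subseteq> Z \<and> Z \<subseteq> A \<and> card Z = card B + m}"
      using assms card_Un by auto
    show "(\<lambda>Z. Z - B) ` {Z. B \<subseteq> Z \<and> Z \<subseteq> A \<and> card Z = card B + m} \<subseteq> {W. W \<subseteq> A - B \<and> card W = m}"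
      using \<open>finite B\<close> by (auto simp: card_Diff_subset)
  qed auto
  then have "card {Z. B \<subseteq> Z \<and> Z \<subseteq> A \<and> card Z = card B + m} = card (A - B) choose m"
    using assms by (simp add: bij_betw_same_card[symmetric] n_subsets)
  then show ?thesis
    using assms \<open>finite B\<close> by (simp add: card_Diff_subset)
qed

lemma card_subsets_containing_pair:
  assumes "finite A" "j \<in> A" "l \<in> A" "2 \<le> card A" "1 \<le> s"
  shows "card {Z \<in> {Z. Z \<subseteq> A \<and> card Z = s + 1}. j \<in> Z \<and> l \<in> Z}
       = (if j = l then card A - 1 choose s else card A - 2 choose (s - 1))"
proof -
  have "{Z \<in> {Z. Z \<subseteq> A \<and> card Z = s + 1}. j \<in> Z \<and> l \<in> Z}
      = {Z. {j, l} \<subseteq> Z \<and> Z \<subseteq> A \<and> card Z = card {j, l} + (if j = l then s else s - 1)}"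
    using assms by auto
  also have "card \<dots> = (card A - card {j, l}) choose (if j = l then s else s - 1)"
    using assms by (intro card_supersets) auto
  finally show ?thesis
    by (simp add: numeral_2_eq_2)
qed

lemma sum_subsets_double_sum:
  fixes g :: "'a \<Rightarrow> 'a \<Rightarrow> 'b :: comm_semiring_1"
  assumes "finite A" "finite F" "\<And>Z. Z \<in> F \<Longrightarrow> Z \<subseteq> A"
  shows "(\<Sum>Z\<in>F. \<Sum>j\<in>Z. \<Sum>l\<in>Z. g j l) = (\<Sum>j\<in>A. \<Sum>l\<in>A. of_nat (card {Z\<in>F. j \<in> Z \<and> l \<in> Z}) * g j l)"
proof -
  have "(\<Sum>Z\<in>F. \<Sum>j\<in>Z. \<Sum>l\<in>Z. g j l) = (\<Sum>Z\<in>F. \<Sum>p | p \<in> A \<times> A \<and> p \<in> Z \<times> Z. case_prod g p)"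
  proof (intro sum.cong refl)
    fix Z assume "Z \<in> F"
    then have "{p. p \<in> A \<times> A \<and> p \<in> Z \<times> Z} = Z \<times> Z"
      using assms(3) by blast
    then show "(\<Sum>j\<in>Z. \<Sum>l\<in>Z. g j l) = (\<Sum>p | p \<in> A \<times> A \<and> p \<in> Z \<times> Z. case_prod g p)"
      by (simp add: sum.cartesian_product)
  qed
  also have "\<dots> = (\<Sum>p\<in>A \<times> A. \<Sum>Z | Z \<in> F \<and> p \<in> Z \<times> Z. case_prod g p)"
    using assms by (intro sum.swap_restrict) auto
  also have "\<dots> = (\<Sum>j\<in>A. \<Sum>l\<in>A. of_nat (card {Z\<in>F. j \<in> Z \<and> l \<in> Z}) * g j l)"
    by (auto simp: sum.cartesian_product intro!: sum.cong)
  finally show ?thesis .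
qed

definition subset_energy :: "('a \<Rightarrow> complex) \<Rightarrow> nat \<Rightarrow> 'a set \<Rightarrow> real" where
  "subset_energy w m A = (\<Sum>Z | Z \<subseteq> A \<and> card Z = m. (cmod (sum w Z))\<^sup>2)"

lemma subset_energy_nonneg: "0 \<le> subset_energy w m A"
  by (simp add: subset_energy_def sum_nonneg)

lemma subset_energy_eq:
  assumes "finite A" "2 \<le> card A" "1 \<le> s"
  shows "subset_energy w (s + 1) A
       = real (card A - 2 choose (s - 1)) * (cmod (sum w A))\<^sup>2
         + real (card A - 2 choose s) * (\<Sum>j\<in>A. (cmod (w j))\<^sup>2)"
proof -
  let ?F = "{Z. Z \<subseteq> A \<and> card Z = s + 1}"
  let ?g = "\<lambda>j l. w j * cnj (w l)"
  have sq: "complex_of_real ((cmod (sum w Z))\<^sup>2) = (\<Sum>j\<in>Z. \<Sum>l\<in>Z. ?g j l)" for Z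
    unfolding complex_norm_square cnj_sum sum_product ..
  have pascal: "card A - 1 choose s = (card A - 2 choose (s - 1)) + (card A - 2 choose s)"
    using assms binomial_Suc_Suc[of "card A - 2" "s - 1"] by (simp add: Suc_diff_Suc numeral_2_eq_2)
  have "complex_of_real (subset_energy w (s + 1) A) = (\<Sum>Z\<in>?F. \<Sum>j\<in>Z. \<Sum>l\<in>Z. ?g j l)"
    by (simp only: subset_energy_def of_real_sum sq)
  also have "\<dots> = (\<Sum>j\<in>A. \<Sum>l\<in>A. of_nat (card {Z\<in>?F. j \<in> Z \<and> l \<in> Z}) * ?g j l)"
    using assms by (intro sum_subsets_double_sum) (auto intro: finite_subset[of _ "Pow A"])
  also have "\<dots> = (\<Sum>j\<in>A. \<Sum>l\<in>A.
      of_nat (if j = l then card A - 1 choose s else card A - 2 choose (s - 1)) * ?g j l)"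
    by (intro sum.cong refl) (simp only: card_subsets_containing_pair[OF assms(1) _ _ assms(2,3)])
  also have "\<dots> = (\<Sum>j\<in>A. \<Sum>l\<in>A. of_nat (card A - 2 choose (s - 1)) * ?g j l
                      + (if j = l then of_nat (card A - 2 choose s) * ?g j l else 0))"
    unfolding pascal by (intro sum.cong refl) (simp add: algebra_simps)
  also have "\<dots> = of_nat (card A - 2 choose (s - 1)) * (\<Sum>j\<in>A. \<Sum>l\<in>A. ?g j l)
                  + of_nat (card A - 2 choose s) * (\<Sum>j\<in>A. ?g j j)"
    using assms by (simp add: sum.distrib sum_distrib_left)
  also have "(\<Sum>j\<in>A. \<Sum>l\<in>A. ?g j l) = complex_of_real ((cmod (sum w A))\<^sup>2)"
    by (rule sq[symmetric])
  also have "(\<Sum>j\<in>A. ?g j j) = complex_of_real (\<Sum>j\<in>A. (cmod (w j))\<^sup>2)"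
    unfolding of_real_sum complex_norm_square ..
  also have "of_nat (card A - 2 choose (s - 1)) * complex_of_real ((cmod (sum w A))\<^sup>2)
      + of_nat (card A - 2 choose s) * complex_of_real (\<Sum>j\<in>A. (cmod (w j))\<^sup>2)
      = complex_of_real (real (card A - 2 choose (s - 1)) * (cmod (sum w A))\<^sup>2
          + real (card A - 2 choose s) * (\<Sum>j\<in>A. (cmod (w j))\<^sup>2))"
    by simp
  finally show ?thesis
    by (simp only: of_real_eq_iff)
qed

lemma subset_energy_unimodular_eq:
  assumes "finite A" "2 \<le> card A" "1 \<le> s" "\<And>j. j \<in> A \<Longrightarrow> cmod (w j) = 1"
  shows "subset_energy w (s + 1) A
       = real (card A - 2 choose (s - 1)) * (cmod (sum w A))\<^sup>2 + real (card A) * real (card A - 2 choose s)"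
  using subset_energy_eq[OF assms(1-3), of w] assms(4) by simp

lemma subset_energy_unimodular_ge:
  assumes "finite A" "1 \<le> s" "\<And>j. j \<in> A \<Longrightarrow> cmod (w j) = 1"
  shows "real (card A) * real (card A - 2 choose s) \<le> subset_energy w (s + 1) A"
proof (cases "2 \<le> card A")
  case True
  then show ?thesis
    using subset_energy_unimodular_eq[OF assms(1) True assms(2-3)] by simp
next
  case False
  then show ?thesis
    using assms subset_energy_nonneg[of w "s + 1" A] by (simp add: binomial_eq_0)
qed

lemma choose_le_choose_diff_add:
  assumes "1 \<le> s" "t \<le> M"
  shows "M choose s \<le> (M - t choose s) + t * (M - 1 choose (s - 1))"
  using assms(2)
proof (induction t)
  case (Suc t)
  have "M - t choose s = (M - Suc t choose (s - 1)) + (M - Suc t choose s)"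
    using Suc.prems assms(1) binomial_Suc_Suc[of "M - Suc t" "s - 1"] by (simp add: Suc_diff_Suc)
  moreover have "M - Suc t choose (s - 1) \<le> M - 1 choose (s - 1)"
    by (rule binomial_right_mono) simp
  ultimately show ?case
    using Suc by simp
qed simp

lemma choose_diff_ge:
  assumes "1 \<le> s" "0 < M"
  shows "real (M choose s) * (1 - real t * real s / real M) \<le> real (M - t choose s)"
proof (cases "t \<le> M")
  case True
  have "real s * real (M choose s) = real M * real (M - 1 choose (s - 1))"
    using times_binomial_minus1_eq[of s M] assms by (simp flip: of_nat_mult)
  then have "real (M choose s) * (1 - real t * real s / real M) = real (M choose s) - real t * real (M - 1 choose (s - 1))"
    using assms by (simp add: field_simps)
  also have "\<dots> \<le> real (M - t choose s)"
    using choose_le_choose_diff_add[OF assms(1) True] by (simp flip: of_nat_mult of_nat_add)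
  finally show ?thesis .
next
  case False
  have "M \<le> t * s"
    using False mult_le_mono2[OF assms(1), of t] by linarith
  then have "real M \<le> real t * real s"
    by (simp flip: of_nat_mult)
  then have "1 - real t * real s / real M \<le> 0"
    using assms by simp
  then show ?thesis
    by (meson mult_nonneg_nonpos of_nat_0_le_iff order_trans)
qed

lemma magnon_norm_sum:
  assumes "B \<subseteq> {..<n}"
  shows "(\<Sum>xs | xs \<in> basis n \<and> zeros xs \<subseteq> B. (cmod ((S_minus n ^^ s) (Psi n) xs))\<^sup>2)
       = (fact s)\<^sup>2 * subset_energy (\<lambda>j. omega n ^ j) (s + 1) B"
proof -
  define G where "G Z = (if card Z = s + 1 then (fact s)\<^sup>2 * (cmod (\<Sum>j\<in>Z. omega n ^ j))\<^sup>2 else 0)" for Z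
  have "(\<Sum>xs | xs \<in> basis n \<and> zeros xs \<subseteq> B. (cmod ((S_minus n ^^ s) (Psi n) xs))\<^sup>2)
      = (\<Sum>xs | xs \<in> basis n \<and> zeros xs \<subseteq> B. G (zeros xs))"
    by (intro sum.cong refl) (simp add: magnon_amplitude G_def basis_def norm_mult power_mult_distrib)
  also have "\<dots> = (\<Sum>Z\<in>Pow B. G Z)"
    by (rule sum_over_zeros[OF assms])
  also have "\<dots> = (fact s)\<^sup>2 * subset_energy (\<lambda>j. omega n ^ j) (s + 1) B"
    using assms by (simp add: G_def subset_energy_def sum_distrib_left sum.If_cases finite_subset Int_def conj_commute)
  finally show ?thesis .
qed

lemma magnon_reduced_weight:
  assumes "d \<le> n"
  shows "Re (ptrace_last n d (proj (magnon n s)) (replicate d True) (replicate d True))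
       = subset_energy (\<lambda>j. omega n ^ j) (s + 1) {d..<n} / subset_energy (\<lambda>j. omega n ^ j) (s + 1) {..<n}"
proof -
  let ?v = "(S_minus n ^^ s) (Psi n)"
  let ?E = "\<lambda>B. subset_energy (\<lambda>j. omega n ^ j) (s + 1) B"
  have total: "(vnorm n ?v)\<^sup>2 = (fact s)\<^sup>2 * ?E {..<n}"
    using magnon_norm_sum[of "{..<n}" n s] basis_eq_zeros_subset[of n]
    by (simp add: vnorm_def sum_nonneg subset_energy_nonneg)
  have "(\<Sum>y\<in>basis (n - d). (cmod (?v (replicate d True @ y)))\<^sup>2)
      = (\<Sum>xs\<in>(\<lambda>y. replicate d True @ y) ` basis (n - d). (cmod (?v xs))\<^sup>2)"
    by (simp add: sum.reindex inj_on_def)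
  also have "\<dots> = (fact s)\<^sup>2 * ?E {d..<n}"
    unfolding append_replicate_True_image[OF assms] by (rule magnon_norm_sum) auto
  finally have partial: "(\<Sum>y\<in>basis (n - d). (cmod (?v (replicate d True @ y)))\<^sup>2) = (fact s)\<^sup>2 * ?E {d..<n}" .
  have Re_div: "Re (z / complex_of_real r * cnj (z / complex_of_real r)) = (cmod z)\<^sup>2 / r\<^sup>2" for z r
    by (simp flip: complex_norm_square add: norm_divide power_divide power2_eq_square)
  have "Re (ptrace_last n d (proj (magnon n s)) (replicate d True) (replicate d True))
      = (\<Sum>y\<in>basis (n - d). (cmod (?v (replicate d True @ y)))\<^sup>2 / (vnorm n ?v)\<^sup>2)"
    unfolding ptrace_last_def proj_def magnon_def Let_def Re_sum Re_div ..
  also have "\<dots> = (fact s)\<^sup>2 * ?E {d..<n} / ((fact s)\<^sup>2 * ?E {..<n})"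
    unfolding sum_divide_distrib[symmetric] partial total ..
  finally show ?thesis
    by simp
qed

lemma diff_mult_choose_ge:
  assumes "4 \<le> n" "1 \<le> s" "d \<le> n"
  shows "(1 - 3 * real d * real s / real n) * (real n * real (n - 2 choose s))
       \<le> real (n - d) * real (n - 2 - d choose s)"
proof -
  let ?M = "n - 2"
  define x where "x = real d * real s / real ?M"
  have "real (n - d) * x \<le> 2 * real ?M * x"
    using assms by (intro mult_right_mono) (auto simp: x_def)
  also have "\<dots> = 2 * (real d * real s)"
    using assms by (simp add: x_def del: of_nat_diff)
  finally have "real (n - d) * x \<le> 2 * (real d * real s)" .
  moreover have "real d \<le> real d * real s"
    using mult_left_mono[of 1 "real s" "real d"] assms by simp
  moreover have "(1 - 3 * real d * real s / real n) * real n = real n - 3 * (real d * real s)"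
    using assms by (simp add: field_simps)
  ultimately have bound: "(1 - 3 * real d * real s / real n) * real n \<le> real (n - d) * (1 - x)"
    using assms by (simp add: of_nat_diff right_diff_distrib)
  have "(1 - 3 * real d * real s / real n) * (real n * real (?M choose s))
      \<le> real (n - d) * (real (?M choose s) * (1 - x))"
    using mult_right_mono[OF bound, of "real (?M choose s)"] by (simp add: mult_ac)
  also have "\<dots> \<le> real (n - d) * real (?M - d choose s)"
    using choose_diff_ge[of s ?M d] assms by (intro mult_left_mono) (simp_all add: x_def)
  finally show ?thesis .
qed

lemma magnon_reduced_weight_ge:
  assumes "4 \<le> n" "1 \<le> s" "s \<le> n - 2" "d \<le> n"
  shows "1 - 3 * real d * real s / real n
       \<le> Re (ptrace_last n d (proj (magnon n s)) (replicate d True) (replicate d True))"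
proof -
  let ?E = "\<lambda>B. subset_energy (\<lambda>j. omega n ^ j) (s + 1) B"
  have unimodular: "cmod (omega n ^ j) = 1" for j
    by (simp add: norm_power)
  have total: "?E {..<n} = real n * real (n - 2 choose s)"
    using subset_energy_unimodular_eq[of "{..<n}" s] assms unimodular by (simp add: sum_omega_powers)
  then have "0 < ?E {..<n}"
    using assms by simp
  have "real (n - d) * real (n - 2 - d choose s) \<le> ?E {d..<n}"
    using subset_energy_unimodular_ge[of "{d..<n}" s] assms unimodular by (simp add: diff_commute)
  then have "(1 - 3 * real d * real s / real n) * ?E {..<n} \<le> ?E {d..<n}"
    unfolding total using diff_mult_choose_ge[OF assms(1,2,4)] by linarith
  then show ?thesis
    using magnon_reduced_weight[OF assms(4)] \<open>0 < ?E {..<n}\<close> by (simp add: pos_le_divide_eq)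
qed

theorem lemma21:
  shows "\<exists>C::real. \<exists>N::nat. \<forall>n\<ge>N. \<forall>s\<in>{1..n-2}. \<forall>d\<le>n.
    Re (ptrace_last n d (proj (magnon n s)) (replicate d True) (replicate d True))
      \<ge> 1 - C * real d * real s / real n"
  using magnon_reduced_weight_ge by (intro exI[of _ 3] exI[of _ 4]) auto

end
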